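(* Let $\vec r_1,\vec r_2$ be in the closed unit ball of $\mathbb{R}^3$, both orthogonal to $(0,0,1)$, with $r_i=|\vec r_i|$. Then for every $p\ge1$, $$D^p_{z,p}(\rho(\vec r_1),\rho(\vec r_2))=2^{p-1}\Big(1-\sqrt{1-\max(r_1^2,r_2^2)}\Big).$$ In particular, if $r_1\ge r_2$, then $D^p_{z,p}(\rho(\vec r_1),\rho(\vec r_2))=D^p_{z,p}(\rho(\vec r_2),\rho(\vec r_1))=D^p_{z,p}(\rho(\vec r_1),\rho(\vec r_1))$.
   Context: Qubit setting: $\mathcal{H}=\mathbb{C}^2$, $\mathcal{H}^*$ is identified with $\mathbb{C}^2$ via the dual basis, and $A^T$ is the usual matrix transpose; operators on $\mathcal{H}\otimes\mathcal{H}^*$ are $4\times4$ matrices in the basis $e_1\otimes e_1^*,e_1\otimes e_2^*,e_2\otimes e_1^*,e_2\otimes e_2^*$. $\sigma_x=\begin{pmatrix}0&1\\1&0\end{pmatrix}$, $\sigma_y=\begin{pmatrix}0&-i\\i&0\end{pmatrix}$, $\sigma_z=\begin{pmatrix}1&0\\0&-1\end{pmatrix}$, $\vec\sigma=(\sigma_x,\sigma_y,\sigma_z)$, and $\rho(\vec r)=\tfrac12(I+\vec r\cdot\vec\sigma)$ for $|\vec r|\le1$. The set of couplings of states $\rho,\omega$ is $\mathcal{C}(\rho,\omega)=\{\Pi\in\mathcal{S}(\mathcal{H}\otimes\mathcal{H}^* ):\mathrm{tr}_{\mathcal{H}^*}[\Pi]=\omega,\ \mathrm{tr}_{\mathcal{H}}[\Pi]=\rho^T\}$.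 For $p\ge1$, $C_{z,p}=|\sigma_z\otimes I^T-I\otimes\sigma_z^T|^p=\mathrm{diag}(0,2^p,2^p,0)$, and $D_{z,p}(\rho,\omega)=\big(\min_{\Pi\in\mathcal{C}(\rho,\omega)}\mathrm{tr}[\Pi C_{z,p}]\big)^{1/p}$. *)

theory Defs
  imports "HOL-Analysis.Analysis"
begin

text \<open>Operators on H \<otimes> H* are
  matrices indexed by pairs (i,j), standing for e_i \<otimes> e_j^*; the basis order
  (1,1),(1,2),(2,1),(2,2) of the paper is the lexicographic order on pairs.\<close>

type_synonym qop = "complex^2^2"
type_synonym qop2 = "complex^(2 \<times> 2)^(2 \<times> 2)"

definition sigma_x :: qop where
  "sigma_x = (\<chi> i j. if i = j then 0 else 1)"

definition sigma_y :: qop where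
  "sigma_y = (\<chi> i j. if i = 1 \<and> j = 2 then - \<i> else if i = 2 \<and> j = 1 then \<i> else 0)"

definition sigma_z :: qop where
  "sigma_z = (\<chi> i j. if i = j then (if i = 1 then 1 else -1) else 0)"

definition smat :: "complex \<Rightarrow> complex^'n^'m \<Rightarrow> complex^'n^'m" where
  "smat c A = (\<chi> i j. c * A$i$j)"

definition bloch :: "real^3 \<Rightarrow> qop" where
  "bloch r = smat (1/2) (mat 1 + smat (complex_of_real (r$1)) sigma_x
                               + smat (complex_of_real (r$2)) sigma_y
                               + smat (complex_of_real (r$3)) sigma_z)"

definition psd :: "complex^'n^'n \<Rightarrow> bool" where
  "psd A \<longleftrightarrow> (\<forall>i j. A$i$j = cnj (A$j$i)) \<and>
     (\<forall>v :: 'n \<Rightarrow> complex. Re (\<Sum>i\<in>UNIV. \<Sum>j\<in>UNIV. cnj (v i) * A$i$j * v j) \<ge> 0)"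

definition is_state :: "complex^'n^'n \<Rightarrow> bool" where
  "is_state A \<longleftrightarrow> psd A \<and> trace A = 1"

definition ptrace_dual :: "complex^('a::finite \<times> 'b::finite)^('a \<times> 'b) \<Rightarrow> complex^'a^'a" where
  "ptrace_dual P = (\<chi> i k. \<Sum>j\<in>UNIV. P$(i,j)$(k,j))"

definition ptrace_H :: "complex^('a::finite \<times> 'b::finite)^('a \<times> 'b) \<Rightarrow> complex^'b^'b" where
  "ptrace_H P = (\<chi> j l. \<Sum>i\<in>UNIV. P$(i,j)$(i,l))"

definition couplings :: "qop \<Rightarrow> qop \<Rightarrow> qop2 set" where
  "couplings \<rho> \<omega> = {P. is_state P \<and> ptrace_dual P = \<omega> \<and> ptrace_H P = transpose \<rho>}"

text \<open>C_{z,p} = |sigma_z \<otimes> I^T - I \<otimes> sigma_z^T|^p. The operator inside the absolute value is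
  diagonal in the product basis with entry sigma_z(i,i) - sigma_z(j,j) at (i,j), so its
  p-th absolute power is the diagonal matrix with entries |sigma_z(i,i) - sigma_z(j,j)|^p,
  i.e. diag(0, 2^p, 2^p, 0).\<close>
definition Cz :: "real \<Rightarrow> qop2" where
  "Cz p = (\<chi> a b. if a = b then
             complex_of_real (cmod (sigma_z$fst a$fst a - sigma_z$snd a$snd a) powr p)
           else 0)"

text \<open>D_{z,p}(rho, omega) = (min over couplings of tr[Pi C_{z,p}])^(1/p);
  the minimum is written as an infimum (it is attained).\<close>
definition Dz :: "real \<Rightarrow> qop \<Rightarrow> qop \<Rightarrow> real" where
  "Dz p \<rho> \<omega> = (Inf {Re (trace (P ** Cz p)) | P. P \<in> couplings \<rho> \<omega>}) powr (1 / p)"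

end

theory Submission
  imports Defs
begin

(* For equatorial states both marginals have diagonal (1/2, 1/2), so every coupling has diagonal
   (1/2 - t, t, t, 1/2 - t) and cost 2^(p+1) t.  Each off-diagonal entry of a marginal is a sum of
   two off-diagonal entries of the coupling, each of modulus at most sqrt (t (1/2 - t)) by
   positivity; hence r_i^2 <= 16 t (1/2 - t) = 1 - (1 - 4t)^2, i.e. 4t >= 1 - sqrt (1 - r_i^2).
   This bound is attained by an even mixture of two pure states (s, q u, q v, s u v) with
   s^2 = 1/2 - t, q^2 = t and |u| = |v| = 1: its marginals have off-diagonal entries
   s q (u + u') and s q (v + v'), and every complex number of modulus at most 4 s q is of the form
   2 s q (u + u'). *)

lemma sum_UNIV_2x2:
  "sum f (UNIV :: (2 \<times> 2) set) = f (1,1) + f (1,2) + f (2,1) + f (2,2)"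
proof -
  have "sum f (UNIV :: (2 \<times> 2) set) = (\<Sum>i\<in>UNIV. \<Sum>j\<in>UNIV. f (i,j))"
    by (simp add: sum.cartesian_product flip: UNIV_Times_UNIV)
  then show ?thesis by (simp add: sum_2 algebra_simps)
qed

definition quad_form :: "complex^'n^'n \<Rightarrow> ('n \<Rightarrow> complex) \<Rightarrow> complex" where
  "quad_form A v = (\<Sum>i\<in>UNIV. \<Sum>j\<in>UNIV. cnj (v i) * A$i$j * v j)"

lemma psd_iff_quad_form:
  "psd A \<longleftrightarrow> (\<forall>i j. A$i$j = cnj (A$j$i)) \<and> (\<forall>v. 0 \<le> Re (quad_form A v))"
  by (simp add: psd_def quad_form_def)

lemma psd_quad_form_nonneg: "psd A \<Longrightarrow> 0 \<le> Re (quad_form A v)"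
  by (simp add: psd_iff_quad_form)

lemma psd_hermitian: "psd A \<Longrightarrow> A$j$i = cnj (A$i$j)"
  unfolding psd_def by metis

lemma psd_diag_real: "psd A \<Longrightarrow> A$i$i = of_real (Re (A$i$i))"
  using psd_hermitian[of A i i] by (simp add: complex_eq_iff)

lemma psd_diag_nonneg:
  assumes "psd A"
  shows "0 \<le> Re (A$i$i)"
proof -
  have "cnj (of_bool (k = i)) * A$k$l * of_bool (l = i) = (if l = i then (if k = i then A$i$i else 0) else 0)"
    for k l
    by simp
  then have "quad_form A (\<lambda>k. of_bool (k = i)) = A$i$i"
    by (simp add: quad_form_def)
  then show ?thesis
    using psd_quad_form_nonneg[OF assms] by metis
qed

lemma psd_two_point:
  assumes "psd A" "i \<noteq> j"
  shows "0 \<le> Re (cnj x * A$i$i * x + cnj x * A$i$j * y + cnj y * A$j$i * x + cnj y * A$j$j * y)"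
proof -
  define v where "v k = (if k = i then x else 0) + (if k = j then y else 0)" for k
  have expand: "cnj (v k) * A$k$l * v l =
      (if k = i then cnj x else 0) * A$k$l * (if l = i then x else 0) +
      (if k = i then cnj x else 0) * A$k$l * (if l = j then y else 0) +
      (if k = j then cnj y else 0) * A$k$l * (if l = i then x else 0) +
      (if k = j then cnj y else 0) * A$k$l * (if l = j then y else 0)" for k l
    by (simp add: v_def algebra_simps)
  have "quad_form A v
      = cnj x * A$i$i * x + cnj x * A$i$j * y + cnj y * A$j$i * x + cnj y * A$j$j * y"
    unfolding quad_form_def expand sum.distrib
    by (simp add: if_distrib[where f="\<lambda>z. z * _"] if_distrib[where f="\<lambda>z. _ * z"]
        cong: if_cong)
  then show ?thesis
    using psd_quad_form_nonneg[OF assms(1), of v] by simp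
qed

lemma psd_offdiag_norm_le:
  assumes "psd A" "i \<noteq> j"
  shows "(cmod (A$i$j))\<^sup>2 \<le> Re (A$i$i) * Re (A$j$j)"
proof -
  define a b n where "a = Re (A$i$i)" and "b = Re (A$j$j)" and "n = (cmod (A$i$j))\<^sup>2"
  have a0: "0 \<le> a" and b0: "0 \<le> b" and n0: "0 \<le> n"
    using psd_diag_nonneg[OF assms(1)] by (simp_all add: a_def b_def n_def)
  have quadratic: "0 \<le> x\<^sup>2 * a * n - 2 * x * y * n + y\<^sup>2 * b" for x y :: real
  proof -
    have "cnj (A$i$j) * A$i$j = of_real n"
      unfolding n_def by (metis complex_norm_square mult.commute)
    then have "cnj (- of_real x * A$i$j) * A$i$i * (- of_real x * A$i$j)
        + cnj (- of_real x * A$i$j) * A$i$j * of_real y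
        + cnj (of_real y) * A$j$i * (- of_real x * A$i$j)
        + cnj (of_real y) * A$j$j * of_real y
        = of_real (x\<^sup>2 * a * n - 2 * x * y * n + y\<^sup>2 * b)"
      using psd_diag_real[OF assms(1), of i] psd_diag_real[OF assms(1), of j]
        psd_hermitian[OF assms(1), of i j]
      unfolding a_def b_def
      by (simp add: power2_eq_square algebra_simps)
    then show ?thesis
      using psd_two_point[OF assms, of "- of_real x * A$i$j" "of_real y"] by simp
  qed
  have "n \<le> a * b"
  proof (cases "b = 0")
    case True
    with quadratic[of 1 "a + 1"] have "(a + 2) * n \<le> 0"
      by (simp add: algebra_simps)
    with a0 n0 True show ?thesis
      by (simp add: mult_le_0_iff)
  next
    case False
    with quadratic[of b n] b0 have "0 \<le> b * n * (a * b - n)"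
      by (simp add: power2_eq_square algebra_simps)
    with False b0 have "0 \<le> n * (a * b - n)"
      by (simp add: zero_le_mult_iff mult.assoc)
    with a0 b0 n0 show ?thesis
      by (cases "n = 0") (auto simp: zero_le_mult_iff)
  qed
  then show ?thesis
    by (simp add: a_def b_def n_def)
qed

lemma psd_offdiag_norm_le_sqrt:
  assumes "psd A" "i \<noteq> j"
  shows "cmod (A$i$j) \<le> sqrt (Re (A$i$i) * Re (A$j$j))"
  using psd_offdiag_norm_le[OF assms] by (simp add: real_le_rsqrt)

definition outer_prod :: "('n \<Rightarrow> complex) \<Rightarrow> complex^'n^'n" where
  "outer_prod w = (\<chi> a b. w a * cnj (w b))"

lemma psd_outer_prod: "psd (outer_prod w)"
  unfolding psd_iff_quad_form
proof (intro conjI allI)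
  show "outer_prod w $ i $ j = cnj (outer_prod w $ j $ i)" for i j
    by (simp add: outer_prod_def mult.commute)
  fix v
  define z where "z = (\<Sum>i\<in>UNIV. cnj (v i) * w i)"
  have "quad_form (outer_prod w) v = z * cnj z"
    by (simp add: quad_form_def z_def outer_prod_def sum_product sum_distrib_left algebra_simps)
  also have "\<dots> = of_real ((cmod z)\<^sup>2)"
    by (simp flip: complex_norm_square)
  finally show "0 \<le> Re (quad_form (outer_prod w) v)"
    by simp
qed

lemma psd_add:
  assumes "psd A" "psd B"
  shows "psd (A + B)"
  unfolding psd_iff_quad_form
proof (intro conjI allI)
  show "(A + B)$i$j = cnj ((A + B)$j$i)" for i j
    using psd_hermitian[OF assms(1), of j i] psd_hermitian[OF assms(2), of j i] by simp
  fix v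
  have "quad_form (A + B) v = quad_form A v + quad_form B v"
    by (simp add: quad_form_def distrib_left distrib_right sum.distrib)
  then show "0 \<le> Re (quad_form (A + B) v)"
    using psd_quad_form_nonneg[OF assms(1), of v] psd_quad_form_nonneg[OF assms(2), of v] by simp
qed

lemma psd_smat:
  assumes "psd A" "0 \<le> c"
  shows "psd (smat (of_real c) A)"
  unfolding psd_iff_quad_form
proof (intro conjI allI)
  show "smat (of_real c) A $ i $ j = cnj (smat (of_real c) A $ j $ i)" for i j
    using psd_hermitian[OF assms(1), of j i] by (simp add: smat_def)
  fix v
  have "quad_form (smat (of_real c) A) v = of_real c * quad_form A v"
    by (simp add: quad_form_def smat_def sum_distrib_left algebra_simps)
  then show "0 \<le> Re (quad_form (smat (of_real c) A) v)"
    using psd_quad_form_nonneg[OF assms(1), of v] assms(2) by simp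
qed

lemma obtain_unit_pair_sum:
  assumes "cmod c \<le> k"
  obtains u u' where "cmod u = 1" "cmod u' = 1" "of_real k * (u + u') = 2 * c"
proof
  define \<theta> where "\<theta> = arccos (cmod c / k)"
  have "k * cos \<theta> = cmod c"
  proof (cases "k = 0")
    case False
    with assms have "0 < k" by (smt (verit) norm_ge_zero)
    with assms have "cos \<theta> = cmod c / k"
      unfolding \<theta>_def by (intro cos_arccos) (auto simp: field_simps intro: order_trans[OF _ norm_ge_zero])
    with False show ?thesis by simp
  qed (use assms in simp)
  have "cis (Arg c + \<theta>) + cis (Arg c - \<theta>) = cis (Arg c) * (cis \<theta> + cis (- \<theta>))"
    by (simp add: distrib_left cis_mult)
  also have "\<dots> = 2 * of_real (cos \<theta>) * cis (Arg c)"
    by (simp add: complex_eq_iff)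
  finally have "of_real k * (cis (Arg c + \<theta>) + cis (Arg c - \<theta>)) = 2 * (of_real (k * cos \<theta>) * cis (Arg c))"
    by simp
  also have "\<dots> = 2 * c"
    using rcis_cmod_Arg[of c] \<open>k * cos \<theta> = cmod c\<close> by (simp add: rcis_def)
  finally show "of_real k * (cis (Arg c + \<theta>) + cis (Arg c - \<theta>)) = 2 * c" .
qed simp_all

lemma quarter_one_minus_sqrt_le:
  fixes n t :: real
  assumes "n \<le> 1 - (1 - 4 * t)\<^sup>2"
  shows "(1 - sqrt (1 - n)) / 4 \<le> t"
proof -
  have "1 - 4 * t \<le> sqrt ((1 - 4 * t)\<^sup>2)" by simp
  also have "\<dots> \<le> sqrt (1 - n)" using assms by (intro real_sqrt_le_mono) linarith
  finally show ?thesis by simp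
qed

lemma unit_mult_cnj: "cmod u = 1 \<Longrightarrow> u * cnj u = 1"
  by (metis complex_norm_square of_real_1 power_one)

lemma bloch_entries:
  "bloch r $ 1 $ 1 = (1 + r$3) / 2"
  "bloch r $ 2 $ 2 = (1 - r$3) / 2"
  "bloch r $ 1 $ 2 = (r$1 - \<i> * r$2) / 2"
  "bloch r $ 2 $ 1 = (r$1 + \<i> * r$2) / 2"
  by (simp_all add: bloch_def smat_def sigma_x_def sigma_y_def sigma_z_def mat_def field_simps)

lemma trace_mult_Cz:
  "Re (trace (P ** Cz p)) = 2 powr p * Re (P$(1,2)$(1,2) + P$(2,1)$(2,1))"
  by (simp add: trace_def matrix_matrix_mult_def Cz_def sum_UNIV_2x2 sigma_z_def algebra_simps)

lemma cmod_equatorial: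
  fixes r :: "real^3"
  assumes "r$3 = 0"
  shows "cmod (of_real (r$1) + \<i> * of_real (r$2)) = norm r"
    and "cmod (of_real (r$1) - \<i> * of_real (r$2)) = norm r"
  using assms by (simp_all add: cmod_def norm_vec_def L2_set_def sum_3)

lemma couplings_equatorial_entries:
  assumes P: "P \<in> couplings (bloch r1) (bloch r2)" and z: "r1$3 = 0" "r2$3 = 0"
  defines "t \<equiv> Re (P$(1,2)$(1,2))"
  shows "P$(1,1)$(1,1) = of_real (1/2 - t)" "P$(2,2)$(2,2) = of_real (1/2 - t)"
    and "P$(1,2)$(1,2) = of_real t" "P$(2,1)$(2,1) = of_real t"
    and "P$(1,1)$(1,2) + P$(2,1)$(2,2) = (of_real (r1$1) + \<i> * of_real (r1$2)) / 2"
    and "P$(1,1)$(2,1) + P$(1,2)$(2,2) = (of_real (r2$1) - \<i> * of_real (r2$2)) / 2"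
proof -
  have psd: "psd P" and dual: "ptrace_dual P = bloch r2" and H: "ptrace_H P = transpose (bloch r1)"
    using P unfolding couplings_def is_state_def by auto
  have marginal_entry: "ptrace_dual P $ i $ k = bloch r2 $ i $ k" "ptrace_H P $ i $ k = bloch r1 $ k $ i" for i k
    using dual H by (simp_all add: transpose_def)
  have e1: "P$(1,1)$(1,1) + P$(1,2)$(1,2) = 1/2" and e4: "P$(1,2)$(1,2) + P$(2,2)$(2,2) = 1/2"
    and e3: "P$(1,1)$(1,1) + P$(2,1)$(2,1) = 1/2"
    using marginal_entry(1)[of 1 1] marginal_entry(2)[of 1 1] marginal_entry(2)[of 2 2] z
    by (simp_all add: ptrace_dual_def ptrace_H_def sum_2 bloch_entries)
  show t: "P$(1,2)$(1,2) = of_real t"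
    unfolding t_def by (rule psd_diag_real[OF psd])
  show "P$(1,1)$(1,1) = of_real (1/2 - t)" using e1 t by (simp add: eq_diff_eq)
  show "P$(2,2)$(2,2) = of_real (1/2 - t)" using e4 t by (simp add: eq_diff_eq add.commute)
  show "P$(2,1)$(2,1) = of_real t" using e1 e3 t by (metis add_left_cancel)
  show "P$(1,1)$(1,2) + P$(2,1)$(2,2) = (of_real (r1$1) + \<i> * of_real (r1$2)) / 2"
    using marginal_entry(2)[of 1 2] by (simp add: ptrace_H_def sum_2 bloch_entries)
  show "P$(1,1)$(2,1) + P$(1,2)$(2,2) = (of_real (r2$1) - \<i> * of_real (r2$2)) / 2"
    using marginal_entry(1)[of 1 2] by (simp add: ptrace_dual_def sum_2 bloch_entries)
qed

lemma couplings_equatorial_norm_le: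
  assumes P: "P \<in> couplings (bloch r1) (bloch r2)" and z: "r1$3 = 0" "r2$3 = 0"
  shows "max ((norm r1)\<^sup>2) ((norm r2)\<^sup>2) \<le> 1 - (1 - 4 * Re (P$(1,2)$(1,2)))\<^sup>2"
proof -
  define t where "t = Re (P$(1,2)$(1,2))"
  note entries = couplings_equatorial_entries[OF P z, folded t_def]
  have psd: "psd P" using P unfolding couplings_def is_state_def by blast
  have t_bounds: "0 \<le> t" "0 \<le> 1/2 - t"
    using psd_diag_nonneg[OF psd, of "(1,2)"] psd_diag_nonneg[OF psd, of "(1,1)"] entries(1)
    by (simp_all add: t_def)
  have "(cmod (P$i1$i2 + P$i3$i4))\<^sup>2 \<le> (1 - (1 - 4 * t)\<^sup>2) / 4"
    if "i1 \<noteq> i2" "i3 \<noteq> i4" and "Re (P$i1$i1) * Re (P$i2$i2) = t * (1/2 - t)"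
      and "Re (P$i3$i3) * Re (P$i4$i4) = t * (1/2 - t)" for i1 i2 i3 i4
  proof -
    have "cmod (P$i1$i2 + P$i3$i4) \<le> cmod (P$i1$i2) + cmod (P$i3$i4)"
      by (rule norm_triangle_ineq)
    also have "\<dots> \<le> 2 * sqrt (t * (1/2 - t))"
      using psd_offdiag_norm_le_sqrt[OF psd that(1)] psd_offdiag_norm_le_sqrt[OF psd that(2)] that(3,4)
      by simp
    finally have "(cmod (P$i1$i2 + P$i3$i4))\<^sup>2 \<le> (2 * sqrt (t * (1/2 - t)))\<^sup>2"
      by (rule power_mono) simp
    also have "\<dots> = 4 * (t * (1/2 - t))"
      using t_bounds by (simp add: power_mult_distrib)
    also have "\<dots> = (1 - (1 - 4 * t)\<^sup>2) / 4"
      by (simp add: power2_eq_square algebra_simps)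
    finally show ?thesis .
  qed
  from this[of "(1,1)" "(1,2)" "(2,1)" "(2,2)"] this[of "(1,1)" "(2,1)" "(1,2)" "(2,2)"]
  have "(norm r1)\<^sup>2 \<le> 1 - (1 - 4 * t)\<^sup>2" "(norm r2)\<^sup>2 \<le> 1 - (1 - 4 * t)\<^sup>2"
    using entries cmod_equatorial[OF z(1)] cmod_equatorial[OF z(2)]
    by (simp_all add: norm_divide power_divide mult.commute)
  then show ?thesis by (simp add: t_def)
qed

lemma couplings_equatorial_cost_ge:
  assumes P: "P \<in> couplings (bloch r1) (bloch r2)" and z: "r1$3 = 0" "r2$3 = 0"
  shows "2 powr (p - 1) * (1 - sqrt (1 - max ((norm r1)\<^sup>2) ((norm r2)\<^sup>2)))
           \<le> Re (trace (P ** Cz p))"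
proof -
  define t where "t = Re (P$(1,2)$(1,2))"
  have "2 powr (p - 1) * (1 - sqrt (1 - max ((norm r1)\<^sup>2) ((norm r2)\<^sup>2)))
      = 2 powr p * (2 * ((1 - sqrt (1 - max ((norm r1)\<^sup>2) ((norm r2)\<^sup>2))) / 4))"
    by (simp add: powr_diff)
  also have "\<dots> \<le> 2 powr p * (2 * t)"
    using quarter_one_minus_sqrt_le[OF couplings_equatorial_norm_le[OF P z]]
    by (simp add: t_def)
  also have "\<dots> = Re (trace (P ** Cz p))"
    using couplings_equatorial_entries(3,4)[OF P z] by (simp add: trace_mult_Cz t_def)
  finally show ?thesis .
qed

definition equatorial_vec :: "real \<Rightarrow> real \<Rightarrow> complex \<Rightarrow> complex \<Rightarrow> 2 \<times> 2 \<Rightarrow> complex" where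
  "equatorial_vec s q u v = (\<lambda>(i, j).
     if i = 1 then (if j = 1 then of_real s else of_real q * u)
     else (if j = 1 then of_real q * v else of_real s * u * v))"

definition equatorial_coupling ::
    "real \<Rightarrow> real \<Rightarrow> complex \<Rightarrow> complex \<Rightarrow> complex \<Rightarrow> complex \<Rightarrow> qop2" where
  "equatorial_coupling s q u v u' v' =
     smat (1/2) (outer_prod (equatorial_vec s q u v) + outer_prod (equatorial_vec s q u' v'))"

lemma equatorial_coupling_entry:
  "equatorial_coupling s q u v u' v' $ a $ b =
     (equatorial_vec s q u v a * cnj (equatorial_vec s q u v b)
      + equatorial_vec s q u' v' a * cnj (equatorial_vec s q u' v' b)) / 2"
  by (simp add: equatorial_coupling_def smat_def outer_prod_def)

context
  fixes s q :: real and u v u' v' :: complex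
  assumes units: "cmod u = 1" "cmod u' = 1" "cmod v = 1" "cmod v' = 1"
    and sq: "s\<^sup>2 + q\<^sup>2 = 1/2"
begin

private lemma unit_facts: "u * cnj u = 1" "u' * cnj u' = 1" "v * cnj v = 1" "v' * cnj v' = 1"
  using units unit_mult_cnj by blast+

private lemma sq_complex: "of_real s * of_real s + of_real q * of_real q = (1/2 :: complex)"
  using arg_cong[OF sq, of complex_of_real] by (simp add: power2_eq_square)

lemma is_state_equatorial_coupling: "is_state (equatorial_coupling s q u v u' v')"
  unfolding is_state_def
proof
  show "psd (equatorial_coupling s q u v u' v')"
    unfolding equatorial_coupling_def
    using psd_smat[OF psd_add[OF psd_outer_prod psd_outer_prod], of "1/2"] by simp
  show "trace (equatorial_coupling s q u v u' v') = 1"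
    unfolding trace_def equatorial_coupling_entry sum_UNIV_2x2 equatorial_vec_def
    using unit_facts sq_complex by simp algebra
qed

lemma equatorial_coupling_cross_diag:
  "equatorial_coupling s q u v u' v' $ (1,2) $ (1,2) = of_real (q\<^sup>2)"
  "equatorial_coupling s q u v u' v' $ (2,1) $ (2,1) = of_real (q\<^sup>2)"
proof -
  show "equatorial_coupling s q u v u' v' $ (1,2) $ (1,2) = of_real (q\<^sup>2)"
    using unit_facts by (simp add: equatorial_coupling_entry equatorial_vec_def power2_eq_square) algebra
  show "equatorial_coupling s q u v u' v' $ (2,1) $ (2,1) = of_real (q\<^sup>2)"
    using unit_facts by (simp add: equatorial_coupling_entry equatorial_vec_def power2_eq_square) algebra
qed

lemma ptrace_dual_equatorial_coupling:
  "ptrace_dual (equatorial_coupling s q u v u' v') = (\<chi> i k. if i = k then 1/2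
     else if i = 1 then of_real (s * q) * (cnj v + cnj v') else of_real (s * q) * (v + v'))"
  unfolding ptrace_dual_def vec_eq_iff forall_2 equatorial_coupling_entry sum_2 equatorial_vec_def
  using unit_facts sq_complex by simp algebra

lemma ptrace_H_equatorial_coupling:
  "ptrace_H (equatorial_coupling s q u v u' v') = (\<chi> i k. if i = k then 1/2
     else if i = 1 then of_real (s * q) * (cnj u + cnj u') else of_real (s * q) * (u + u'))"
  unfolding ptrace_H_def vec_eq_iff forall_2 equatorial_coupling_entry sum_2 equatorial_vec_def
  using unit_facts sq_complex by simp algebra

lemma equatorial_coupling_in_couplings:
  assumes z: "r1$3 = 0" "r2$3 = 0"
    and u: "of_real (s * q) * (u + u') = (of_real (r1$1) - \<i> * of_real (r1$2)) / 2"
    and v: "of_real (s * q) * (v + v') = (of_real (r2$1) + \<i> * of_real (r2$2)) / 2"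
  shows "equatorial_coupling s q u v u' v' \<in> couplings (bloch r1) (bloch r2)"
proof -
  have cu: "of_real (s * q) * (cnj u + cnj u') = (of_real (r1$1) + \<i> * of_real (r1$2)) / 2"
    using arg_cong[OF u, of cnj] by simp
  have cv: "of_real (s * q) * (cnj v + cnj v') = (of_real (r2$1) - \<i> * of_real (r2$2)) / 2"
    using arg_cong[OF v, of cnj] by simp
  have "ptrace_dual (equatorial_coupling s q u v u' v') = bloch r2"
    unfolding ptrace_dual_equatorial_coupling vec_eq_iff forall_2
    using z v cv by (simp add: bloch_entries)
  moreover have "ptrace_H (equatorial_coupling s q u v u' v') = transpose (bloch r1)"
    unfolding ptrace_H_equatorial_coupling vec_eq_iff forall_2
    using z u cu by (simp add: bloch_entries transpose_def)
  ultimately show ?thesis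
    using is_state_equatorial_coupling unfolding couplings_def by blast
qed

end

lemma obtain_equatorial_coupling:
  fixes r1 r2 :: "real^3"
  assumes sq: "s\<^sup>2 + q\<^sup>2 = 1/2" and z: "r1$3 = 0" "r2$3 = 0"
    and norms: "norm r1 \<le> 4 * s * q" "norm r2 \<le> 4 * s * q"
  obtains P where "P \<in> couplings (bloch r1) (bloch r2)"
    and "Re (trace (P ** Cz p)) = 2 powr p * (2 * q\<^sup>2)"
proof -
  define z1 z2 where "z1 = of_real (r1$1) - \<i> * of_real (r1$2)"
    and "z2 = of_real (r2$1) + \<i> * of_real (r2$2)"
  have z_le: "cmod z1 \<le> 4 * s * q" "cmod z2 \<le> 4 * s * q"
    using norms cmod_equatorial[OF z(1)] cmod_equatorial[OF z(2)] by (simp_all add: z1_def z2_def)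
  obtain u u' where u: "cmod u = 1" "cmod u' = 1" "of_real (4 * s * q) * (u + u') = 2 * z1"
    by (rule obtain_unit_pair_sum[OF z_le(1)])
  obtain v v' where v: "cmod v = 1" "cmod v' = 1" "of_real (4 * s * q) * (v + v') = 2 * z2"
    by (rule obtain_unit_pair_sum[OF z_le(2)])
  have quarter: "of_real (s * q) * w = of_real (4 * s * q) * w / 4" for w :: complex
    by simp
  have "of_real (s * q) * (u + u') = z1 / 2" "of_real (s * q) * (v + v') = z2 / 2"
    unfolding quarter u(3) v(3) by simp_all
  note W = equatorial_coupling_in_couplings[OF u(1,2) v(1,2) sq z this[unfolded z1_def z2_def]]
  have "Re (trace (equatorial_coupling s q u v u' v' ** Cz p)) = 2 powr p * (2 * q\<^sup>2)"
    by (simp add: trace_mult_Cz equatorial_coupling_cross_diag[OF u(1,2) v(1,2) sq])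
  with W show ?thesis by (rule that)
qed

lemma couplings_equatorial_cost_attained:
  fixes r1 r2 :: "real^3"
  assumes z: "r1$3 = 0" "r2$3 = 0" and norms: "norm r1 \<le> 1" "norm r2 \<le> 1"
  obtains P where "P \<in> couplings (bloch r1) (bloch r2)"
    and "Re (trace (P ** Cz p)) = 2 powr (p - 1) * (1 - sqrt (1 - max ((norm r1)\<^sup>2) ((norm r2)\<^sup>2)))"
proof -
  define M where "M = max ((norm r1)\<^sup>2) ((norm r2)\<^sup>2)"
  have M: "0 \<le> M" "M \<le> 1"
    using norms unfolding M_def by (auto simp: max_def power_le_one)
  define t where "t = (1 - sqrt (1 - M)) / 4"
  have t: "0 \<le> t" "t \<le> 1/4" using M unfolding t_def by auto
  have sqrt_M: "1 - 4 * t = sqrt (1 - M)" unfolding t_def by (simp add: field_simps)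
  define s q where "s = sqrt (1/2 - t)" and "q = sqrt t"
  have s2: "s\<^sup>2 = 1/2 - t" and q2: "q\<^sup>2 = t" using t by (simp_all add: s_def q_def)
  then have sq: "s\<^sup>2 + q\<^sup>2 = 1/2" by simp
  have "(4 * s * q)\<^sup>2 = 16 * s\<^sup>2 * q\<^sup>2"
    by (simp add: power_mult_distrib)
  also have "\<dots> = 1 - (1 - 4 * t)\<^sup>2"
    unfolding s2 q2 by (simp add: power2_eq_square algebra_simps)
  also have "\<dots> = M"
    using M unfolding sqrt_M by simp
  finally have "(norm r1)\<^sup>2 \<le> (4 * s * q)\<^sup>2" "(norm r2)\<^sup>2 \<le> (4 * s * q)\<^sup>2"
    by (simp_all add: M_def)
  moreover have "0 \<le> 4 * s * q"
    using t by (simp add: s_def q_def)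
  ultimately have "norm r1 \<le> 4 * s * q" "norm r2 \<le> 4 * s * q"
    by (simp_all only: power2_le_imp_le)
  then obtain P where P: "P \<in> couplings (bloch r1) (bloch r2)"
    and cost: "Re (trace (P ** Cz p)) = 2 powr p * (2 * q\<^sup>2)"
    by (rule obtain_equatorial_coupling[OF sq z])
  have "2 powr p * (2 * q\<^sup>2) = 2 powr (p - 1) * (1 - sqrt (1 - M))"
    by (simp add: q2 t_def powr_diff)
  with P cost show ?thesis
    unfolding M_def by (intro that) simp_all
qed

lemma Dz_equatorial_powr:
  fixes r1 r2 :: "real^3"
  assumes z: "r1$3 = 0" "r2$3 = 0" and norms: "norm r1 \<le> 1" "norm r2 \<le> 1" and "p \<noteq> 0"
  shows "Dz p (bloch r1) (bloch r2) powr p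
           = 2 powr (p - 1) * (1 - sqrt (1 - max ((norm r1)\<^sup>2) ((norm r2)\<^sup>2)))"
proof -
  define L where "L = 2 powr (p - 1) * (1 - sqrt (1 - max ((norm r1)\<^sup>2) ((norm r2)\<^sup>2)))"
  define S where "S = {Re (trace (P ** Cz p)) | P. P \<in> couplings (bloch r1) (bloch r2)}"
  obtain P where "P \<in> couplings (bloch r1) (bloch r2)" "Re (trace (P ** Cz p)) = L"
    using couplings_equatorial_cost_attained[OF z norms] unfolding L_def by metis
  then have "L \<in> S" unfolding S_def by blast
  moreover have "L \<le> x" if "x \<in> S" for x
    using that couplings_equatorial_cost_ge[OF _ z, of _ p] unfolding S_def L_def by blast
  ultimately have "Inf S = L"
    by (rule cInf_eq_minimum)
  moreover have "0 \<le> L"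
    unfolding L_def by (simp add: le_max_iff_disj)
  ultimately show ?thesis
    using assms(5) by (simp add: Dz_def S_def[symmetric] L_def[symmetric] powr_powr)
qed

lemma inner_vector_e3: "r \<bullet> vector [0, 0, 1] = (r :: real^3)$3"
  by (simp add: inner_vec_def sum_3)

theorem theorem3p6:
  fixes r1 r2 :: "real^3" and p :: real
  assumes "norm r1 \<le> 1" and "norm r2 \<le> 1"
    and "r1 \<bullet> vector [0, 0, 1] = 0" and "r2 \<bullet> vector [0, 0, 1] = 0"
    and "p \<ge> 1"
  shows "Dz p (bloch r1) (bloch r2) powr p
           = 2 powr (p - 1) * (1 - sqrt (1 - max ((norm r1)\<^sup>2) ((norm r2)\<^sup>2)))
         \<and> (norm r1 \<ge> norm r2 \<longrightarrow>
           (Dz p (bloch r1) (bloch r2) powr p = Dz p (bloch r2) (bloch r1) powr p \<and>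
           Dz p (bloch r2) (bloch r1) powr p = Dz p (bloch r1) (bloch r1) powr p))"
proof -
  have z: "r1$3 = 0" "r2$3 = 0" and "p \<noteq> 0"
    using assms(3-5) by (simp_all add: inner_vector_e3)
  note formula = Dz_equatorial_powr[OF _ _ _ _ \<open>p \<noteq> 0\<close>]
  have "norm r2 \<le> norm r1 \<Longrightarrow> (norm r2)\<^sup>2 \<le> (norm r1)\<^sup>2"
    by (simp add: power_mono)
  then show ?thesis
    using formula[OF z assms(1,2)] formula[OF z(2,1) assms(2,1)] formula[OF z(1,1) assms(1,1)]
    by (auto simp: max_def)
qed

end
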